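(* Under the Standing Setup (see context), let $\{x^k\}$ be generated by Algorithm 1 and let $x^*$ be its limit, with $f(x^* )=\inf_{x\in B[\bar x,\beta]}f(x)$. Given $\epsilon>0$ and an integer $T$, suppose that $$\|x^{k+1}-x^k\|>\epsilon\quad\text{for } k=0,\dots,T.$$ Then $$T<2+\frac{2}{\rho}\bigl(f(x^0)-f(x^* )\bigr)\epsilon^{-2}.$$
   Context: $B(x,r)$, $B[x,r]$: open and closed Euclidean balls. For $\mu>0$: $e_\mu f(x):=\min_y\{f(y)+\frac{1}{2\mu}\|y-x\|^2\}$ (Moreau envelope), $P_\mu f(x):=\operatorname{argmin}_y\{f(y)+\frac{1}{2\mu}\|y-x\|^2\}$ (proximal operator). $\partial f$: limiting subdifferential. $f$ is $\rho$-weakly convex on $U$ if $f(\alpha x+(1-\alpha)y)\le \alpha f(x)+(1-\alpha)f(y)+\frac{\rho\alpha(1-\alpha)}{2}\|x-y\|^2$ for all $x,y\in U$, $\alpha\in[0,1]$. Standing Fact (cited): if $f$ is $\rho$-weakly convex on $\mathbb{R}^n$, $\rho>0$, $0\in\partial f(\bar x)$ and $\mu\in(0,1/\rho)$, there is $\alpha>0$ such that on $B[\bar x,\alpha]$, $P_\mu f$ is single-valued, $1/(1-\mu\rho)$-Lipschitz, equal to $(I+\mu\partial f)^{-1}$, and $e_\mu f$ is $C^1$ with $\nabla e_\mu f(x)=\mu^{-1}(x-P_\mu f(x))$. Standing Setup: $f:\mathbb{R}^n\to\mathbb{R}\cup\{+\infty\}$ is proper, lower semicontinuous, bounded below and $\rho$-weakly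 convex on $\mathbb{R}^n$, $\rho>0$; $\bar x\in\operatorname{dom}f$ with $0\in\partial f(\bar x)$. Fix $\bar\lambda>0$ and bounded sequences $\{\gamma_k\},\{\lambda_k\}$ with $0<\bar\lambda<2\gamma_k<\lambda_k<1/\rho$ for all $k$. Let $\delta>0$ be such that, for every $k$, the Standing Fact holds on $B[\bar x,\delta]$ for $\mu=\gamma_k$ and $\mu=\lambda_k$, and (Assumption 1) the Moreau envelopes $e_{\gamma_k}f$ and $e_{\lambda_k}f$ are convex on $B[\bar x,\delta]$. For each $k$ let $L_k:=1+\frac{\lambda_k-\gamma_k}{\gamma_k}\bigl(1+\frac{1}{1-\gamma_k\rho}\bigr)$, pick $\sigma_k\in(0,2/L_k^2)$, set $\kappa_k:=1-2\sigma_k+\sigma_k^2L_k^2$, and let $\beta>0$ satisfy $\beta<\min\{\delta,\frac{\delta}{\sigma_k}(1-\sqrt{\kappa_k})\}$ for all $k$. Algorithm 1: choose $x^0\in B[\bar x,\beta]$. Given $x^k\in B[\bar x,\beta]$: (a) compute $z^k\in B(\bar x,\delta)$ with $z^k=x^k-(\lambda_k-\gamma_k)\nabla e_{\gamma_k}f(z^k)$; (b) set $x^{k+1}=z^k-\gamma_k(\lambda_k-\gamma_k)^{-1}(x^k-z^k)$. *)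

theory Defs
  imports "HOL-Analysis.Analysis" "HOL-Library.Extended_Real"
begin

definition proper_fun :: "('a \<Rightarrow> ereal) \<Rightarrow> bool" where
  "proper_fun f \<longleftrightarrow> (\<forall>x. f x \<noteq> -\<infinity>) \<and> (\<exists>x. f x < \<infinity>)"

definition lsc_fun :: "('a::topological_space \<Rightarrow> ereal) \<Rightarrow> bool" where
  "lsc_fun f \<longleftrightarrow> (\<forall>x. f x \<le> Liminf (at x) f)"

definition bounded_below_fun :: "('a \<Rightarrow> ereal) \<Rightarrow> bool" where
  "bounded_below_fun f \<longleftrightarrow> (\<exists>c::real. \<forall>x. ereal c \<le> f x)"

definition weakly_convex_on :: "real \<Rightarrow> 'a::real_normed_vector set \<Rightarrow> ('a \<Rightarrow> ereal) \<Rightarrow> bool" where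
  "weakly_convex_on \<rho> U f \<longleftrightarrow>
     (\<forall>x\<in>U. \<forall>y\<in>U. \<forall>a::real. 0 \<le> a \<and> a \<le> 1 \<longrightarrow>
        f (a *\<^sub>R x + (1 - a) *\<^sub>R y)
          \<le> ereal a * f x + ereal (1 - a) * f y + ereal (\<rho> * a * (1 - a) / 2 * (norm (x - y))\<^sup>2))"

definition frechet_subdiff :: "('a::real_inner \<Rightarrow> ereal) \<Rightarrow> 'a \<Rightarrow> 'a set" where
  "frechet_subdiff f x = {v. \<bar>f x\<bar> \<noteq> \<infinity> \<and>
     (\<forall>e>0. \<exists>d>0. \<forall>y. norm (y - x) < d \<longrightarrow>
        f y \<ge> f x + ereal (inner v (y - x) - e * norm (y - x)))}"

definition limiting_subdiff :: "('a::real_inner \<Rightarrow> ereal) \<Rightarrow> 'a \<Rightarrow> 'a set" where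
  "limiting_subdiff f x = {v. \<exists>xs vs. (xs \<longlonglongrightarrow> x) \<and> ((\<lambda>k. f (xs k)) \<longlonglongrightarrow> f x)
       \<and> (vs \<longlonglongrightarrow> v) \<and> (\<forall>k. vs k \<in> frechet_subdiff f (xs k))}"

definition moreau_env :: "real \<Rightarrow> ('a::real_normed_vector \<Rightarrow> ereal) \<Rightarrow> 'a \<Rightarrow> ereal" where
  "moreau_env \<mu> f x = (INF y. f y + ereal ((norm (y - x))\<^sup>2 / (2 * \<mu>)))"

definition prox :: "real \<Rightarrow> ('a::real_normed_vector \<Rightarrow> ereal) \<Rightarrow> 'a \<Rightarrow> 'a set" where
  "prox \<mu> f x = {y. \<forall>z. f y + ereal ((norm (y - x))\<^sup>2 / (2 * \<mu>))
                         \<le> f z + ereal ((norm (z - x))\<^sup>2 / (2 * \<mu>))}"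

text \<open>Conclusion of the Standing Fact on the closed ball cball xb r for parameter mu:
  P_mu f single-valued, 1/(1 - mu rho)-Lipschitz, equal to (I + mu \<partial>f)^{-1};
  e_mu f real-valued, continuously differentiable with gradient (x - P_mu f x)/mu.\<close>
definition standing_fact_on ::
  "('a::euclidean_space \<Rightarrow> ereal) \<Rightarrow> real \<Rightarrow> real \<Rightarrow> 'a \<Rightarrow> real \<Rightarrow> bool" where
  "standing_fact_on f \<rho> \<mu> xb r \<longleftrightarrow>
     (\<exists>p. (\<forall>x\<in>cball xb r. prox \<mu> f x = {p x})
        \<and> (\<forall>x\<in>cball xb r. \<forall>y\<in>cball xb r. norm (p x - p y) \<le> (1 / (1 - \<mu> * \<rho>)) * norm (x - y))
        \<and> (\<forall>x\<in>cball xb r. prox \<mu> f x = {y. x \<in> (\<lambda>v. y + \<mu> *\<^sub>R v) ` limiting_subdiff f y})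
        \<and> (\<forall>x\<in>cball xb r. \<bar>moreau_env \<mu> f x\<bar> \<noteq> \<infinity> \<and>
              GDERIV (\<lambda>u. real_of_ereal (moreau_env \<mu> f u)) x :> ((1 / \<mu>) *\<^sub>R (x - p x)))
        \<and> continuous_on (cball xb r) (\<lambda>x. (1 / \<mu>) *\<^sub>R (x - p x)))"

end

theory Submission
  imports Defs
begin

text \<open>Writing \<open>g = \<nabla>e\<^sub>\<gamma>f(z\<^sub>k)\<close>, the step from \<open>z\<^sub>k\<close> to \<open>x\<^sub>k\<^sub>+\<^sub>1 = z\<^sub>k - \<gamma>g\<close> lands exactly
  on the proximal point \<open>P\<^sub>\<gamma>f(z\<^sub>k)\<close>, so \<open>e\<^sub>\<gamma>f(z\<^sub>k) = f(x\<^sub>k\<^sub>+\<^sub>1) + \<gamma>/2 |g|\<^sup>2\<close>. The gradient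
  inequality of the convex envelope, \<open>e\<^sub>\<gamma>f(x\<^sub>k) \<le> f(x\<^sub>k)\<close> and \<open>\<rho>\<lambda> \<le> 1\<close> turn this into the
  sufficient decrease \<open>f(x\<^sub>k\<^sub>+\<^sub>1) + \<rho>/2 |x\<^sub>k\<^sub>+\<^sub>1 - x\<^sub>k|\<^sup>2 \<le> f(x\<^sub>k)\<close>. Summing it over the first
  \<open>T + 1\<close> steps, each longer than \<open>\<epsilon>\<close>, and using \<open>f(x\<^sup>*) \<le> f(x\<^sub>k)\<close> bounds \<open>T\<close>.\<close>

lemma gderiv_unique:
  assumes "GDERIV E x :> g" and "GDERIV E x :> h"
  shows "g = h"
proof -
  have "(\<lambda>v. inner v g) = (\<lambda>v. inner v h)"
    using has_derivative_unique assms unfolding gderiv_def by blast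
  hence "inner (g - h) g = inner (g - h) h" by metis
  hence "inner (g - h) (g - h) = 0" by (simp add: inner_diff_right)
  thus ?thesis by simp
qed

lemma convex_on_gderiv_le:
  fixes E :: "'a::real_inner \<Rightarrow> real"
  assumes cvx: "convex_on S E" and "z \<in> S" and "x \<in> S"
    and gd: "GDERIV E z :> g"
  shows "E z + inner g (x - z) \<le> E x"
proof -
  define d where "d = x - z"
  define h where "h t = E (z + t *\<^sub>R d)" for t :: real
  have line: "((\<lambda>t::real. z + t *\<^sub>R d) has_derivative (\<lambda>t. t *\<^sub>R d)) (at 0)"
    by (auto intro!: derivative_eq_intros)
  have "(E has_derivative (\<lambda>v. inner v g)) (at (z + 0 *\<^sub>R d))"
    using gd by (simp add: gderiv_def)
  from diff_chain_at[OF line this]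
  have "(h has_derivative (\<lambda>t. inner (t *\<^sub>R d) g)) (at 0)"
    unfolding h_def by (simp add: o_def)
  moreover have "(\<lambda>t. inner (t *\<^sub>R d) g) = (*) (inner g d)"
    by (rule ext) (simp add: inner_commute)
  ultimately have "(h has_field_derivative inner g d) (at 0)"
    by (simp add: has_field_derivative_def)
  hence lim: "((\<lambda>t. (h t - h 0) / t) \<longlongrightarrow> inner g d) (at_right 0)"
    using tendsto_mono[OF at_le[of "{0<..}" UNIV]] by (simp add: DERIV_def)
  have "eventually (\<lambda>t. (h t - h 0) / t \<le> E x - E z) (at_right (0::real))"
    using eventually_at_right_real[OF zero_less_one]
  proof eventually_elim
    case (elim t)
    have "z + t *\<^sub>R d = (1 - t) *\<^sub>R z + t *\<^sub>R x" by (simp add: d_def algebra_simps)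
    hence "h t \<le> (1 - t) * E z + t * E x"
      unfolding h_def using convex_onD[OF cvx, of t z x] elim assms by auto
    hence "h t - h 0 \<le> t * (E x - E z)" by (simp add: h_def algebra_simps)
    thus ?case using elim by (simp add: divide_simps mult.commute)
  qed
  with lim have "inner g d \<le> E x - E z"
    by (intro tendsto_le[OF trivial_limit_at_right_real tendsto_const])
  thus ?thesis by (simp add: d_def)
qed

lemma moreau_env_le_self: "moreau_env \<mu> f x \<le> f x"
proof -
  have "moreau_env \<mu> f x \<le> f x + ereal ((norm (x - x))\<^sup>2 / (2 * \<mu>))"
    unfolding moreau_env_def by (rule INF_lower) simp
  thus ?thesis by simp
qed

lemma moreau_env_eq_prox:
  assumes "y \<in> prox \<mu> f x"
  shows "moreau_env \<mu> f x = f y + ereal ((norm (y - x))\<^sup>2 / (2 * \<mu>))"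
  unfolding moreau_env_def
proof (rule antisym)
  show "(INF u. f u + ereal ((norm (u - x))\<^sup>2 / (2 * \<mu>)))
      \<le> f y + ereal ((norm (y - x))\<^sup>2 / (2 * \<mu>))"
    by (rule INF_lower) simp
  show "f y + ereal ((norm (y - x))\<^sup>2 / (2 * \<mu>))
      \<le> (INF u. f u + ereal ((norm (u - x))\<^sup>2 / (2 * \<mu>)))"
    using assms unfolding prox_def by (auto intro: INF_greatest)
qed

lemma moreau_gradient_step_descent:
  fixes f :: "'a::euclidean_space \<Rightarrow> ereal" and \<gamma> :: real
  defines "E \<equiv> \<lambda>u. real_of_ereal (moreau_env \<gamma> f u)"
  assumes sf: "standing_fact_on f \<rho> \<gamma> xb \<delta>"
    and cvx: "convex_on (cball xb \<delta>) E"
    and gamma: "0 < \<gamma>" "\<gamma> < lam" and rho_lam: "\<rho> * lam \<le> 1"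
    and x: "x \<in> cball xb \<delta>" and z: "z \<in> cball xb \<delta>"
    and gd: "GDERIV E z :> g" and zeq: "z = x - (lam - \<gamma>) *\<^sub>R g"
    and x': "x' = z - (\<gamma> / (lam - \<gamma>)) *\<^sub>R (x - z)"
  shows "f x' + ereal (\<rho> / 2 * (norm (x' - x))\<^sup>2) \<le> f x"
proof -
  obtain p where prox_p: "\<forall>u\<in>cball xb \<delta>. prox \<gamma> f u = {p u}"
    and env_p: "\<forall>u\<in>cball xb \<delta>. \<bar>moreau_env \<gamma> f u\<bar> \<noteq> \<infinity> \<and>
       GDERIV E u :> ((1 / \<gamma>) *\<^sub>R (u - p u))"
    using sf unfolding standing_fact_on_def E_def by blast
  have g: "g = (1 / \<gamma>) *\<^sub>R (z - p z)"
    using gderiv_unique gd env_p z by blast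
  have xz: "x - z = (lam - \<gamma>) *\<^sub>R g" using zeq by simp
  have x'z: "x' = z - \<gamma> *\<^sub>R g" using x' xz gamma by simp
  hence "x' \<in> prox \<gamma> f z" using prox_p z g gamma by simp
  hence "moreau_env \<gamma> f z = f x' + ereal ((norm (x' - z))\<^sup>2 / (2 * \<gamma>))"
    by (rule moreau_env_eq_prox)
  also have "(norm (x' - z))\<^sup>2 / (2 * \<gamma>) = \<gamma> / 2 * (norm g)\<^sup>2"
    using x'z gamma by (simp add: power2_eq_square)
  moreover have "moreau_env \<gamma> f z = ereal (E z)" "moreau_env \<gamma> f x = ereal (E x)"
    using env_p x z unfolding E_def by (auto simp: ereal_real')
  ultimately have env_z: "ereal (E z) = f x' + ereal (\<gamma> / 2 * (norm g)\<^sup>2)"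
    and env_x: "ereal (E x) \<le> f x"
    using moreau_env_le_self by metis+
  have tangent: "E z + (lam - \<gamma>) * (norm g)\<^sup>2 \<le> E x"
    using convex_on_gderiv_le[OF cvx z x gd] xz by (simp add: power2_norm_eq_inner)
  have "\<rho> * lam * lam \<le> 2 * lam - \<gamma>"
    using mult_right_mono[OF rho_lam, of lam] gamma by linarith
  hence "\<rho> * lam * lam * (norm g)\<^sup>2 \<le> (2 * lam - \<gamma>) * (norm g)\<^sup>2"
    by (rule mult_right_mono) simp
  hence decrease: "\<rho> / 2 * (lam * norm g)\<^sup>2 \<le> \<gamma> / 2 * (norm g)\<^sup>2 + (lam - \<gamma>) * (norm g)\<^sup>2"
    by (simp add: power_mult_distrib power2_eq_square algebra_simps)
  have "norm (x' - x) = lam * norm g"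
  proof -
    have "x' - x = (z - \<gamma> *\<^sub>R g) - (z + (lam - \<gamma>) *\<^sub>R g)"
      using x'z xz by (metis diff_add_cancel add.commute)
    hence "x' - x = - (lam *\<^sub>R g)" by (simp add: algebra_simps)
    thus ?thesis using gamma by simp
  qed
  hence "f x' + ereal (\<rho> / 2 * (norm (x' - x))\<^sup>2)
      \<le> f x' + ereal (\<gamma> / 2 * (norm g)\<^sup>2) + ereal ((lam - \<gamma>) * (norm g)\<^sup>2)"
    using decrease by (simp add: add.assoc add_left_mono)
  also have "\<dots> = ereal (E z + (lam - \<gamma>) * (norm g)\<^sup>2)" unfolding env_z[symmetric] by simp
  also have "\<dots> \<le> ereal (E x)" using tangent by simp
  finally show ?thesis using env_x by simp
qed

lemma ereal_telescope_le:
  fixes F :: "nat \<Rightarrow> ereal" and c :: "nat \<Rightarrow> real"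
  assumes "\<And>k. F (Suc k) + ereal (c k) \<le> F k"
  shows "F n + ereal (\<Sum>k<n. c k) \<le> F 0"
proof (induction n)
  case (Suc n)
  have "F (Suc n) + ereal (\<Sum>k<Suc n. c k) = (F (Suc n) + ereal (c n)) + ereal (\<Sum>k<n. c k)"
    by (simp only: sum.lessThan_Suc plus_ereal.simps(1)[symmetric] ac_simps)
  also have "\<dots> \<le> F n + ereal (\<Sum>k<n. c k)" using assms add_right_mono by blast
  finally show ?case using Suc.IH by simp
qed simp

lemma long_steps_bound:
  fixes d :: "nat \<Rightarrow> real" and T :: int
  assumes "\<rho> > 0" "\<epsilon> > 0"
    and energy: "\<And>n. \<rho> / 2 * (\<Sum>k<n. (d k)\<^sup>2) \<le> D"
    and long: "\<And>k. int k \<le> T \<Longrightarrow> \<epsilon> < d k"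
  shows "real_of_int T < 2 + 2 / \<rho> * D * (1 / \<epsilon>\<^sup>2)"
proof -
  have "0 \<le> D" using energy[of 0] by simp
  hence bound_nonneg: "0 \<le> 2 / \<rho> * D * (1 / \<epsilon>\<^sup>2)" using \<open>\<rho> > 0\<close> by simp
  show ?thesis
  proof (cases "T < 0")
    case False
    define n where "n = Suc (nat T)"
    have "(\<Sum>k<n. \<epsilon>\<^sup>2) < (\<Sum>k<n. (d k)\<^sup>2)"
    proof (rule sum_strict_mono)
      fix k assume "k \<in> {..<n}"
      hence "\<epsilon> < d k" using False long by (simp add: n_def)
      thus "\<epsilon>\<^sup>2 < (d k)\<^sup>2" using \<open>\<epsilon> > 0\<close> by (simp add: power_strict_mono)
    qed (auto simp: n_def)
    hence "\<rho> / 2 * (real n * \<epsilon>\<^sup>2) < \<rho> / 2 * (\<Sum>k<n. (d k)\<^sup>2)"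
      using \<open>\<rho> > 0\<close> by simp
    hence "\<rho> / 2 * (real n * \<epsilon>\<^sup>2) < D" using energy[of n] by linarith
    hence "real n < 2 / \<rho> * D * (1 / \<epsilon>\<^sup>2)" using assms by (simp add: field_simps)
    thus ?thesis using False by (simp add: n_def)
  qed (use bound_nonneg in linarith)
qed

theorem theorem4p7:
  fixes f :: "'a::euclidean_space \<Rightarrow> ereal"
    and \<rho> :: real and xb :: 'a
    and lamb \<delta> \<beta> \<epsilon> :: real
    and \<gamma> lam \<sigma> :: "nat \<Rightarrow> real"
    and x z :: "nat \<Rightarrow> 'a" and xstar :: 'a
    and T :: int
  assumes proper: "proper_fun f"
    and lsc: "lsc_fun f"
    and bdd: "bounded_below_fun f"
    and rho_pos: "\<rho> > 0"
    and wcvx: "weakly_convex_on \<rho> UNIV f"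
    and xb_dom: "f xb < \<infinity>"
    and crit: "0 \<in> limiting_subdiff f xb"
    and lb_pos: "lamb > 0"
    and bdd_gamma: "bounded (range \<gamma>)"
    and bdd_lambda: "bounded (range lam)"
    and param: "\<And>k. lamb < 2 * \<gamma> k \<and> 2 * \<gamma> k < lam k \<and> lam k < 1 / \<rho>"
    and delta_pos: "\<delta> > 0"
    and sf_gamma: "\<And>k. standing_fact_on f \<rho> (\<gamma> k) xb \<delta>"
    and sf_lambda: "\<And>k. standing_fact_on f \<rho> (lam k) xb \<delta>"
    and cvx_gamma: "\<And>k. convex_on (cball xb \<delta>) (\<lambda>u. real_of_ereal (moreau_env (\<gamma> k) f u))"
    and cvx_lambda: "\<And>k. convex_on (cball xb \<delta>) (\<lambda>u. real_of_ereal (moreau_env (lam k) f u))"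
    and sigma: "\<And>k. 0 < \<sigma> k \<and>
        \<sigma> k < 2 / (1 + (lam k - \<gamma> k) / \<gamma> k * (1 + 1 / (1 - \<gamma> k * \<rho>)))\<^sup>2"
    and beta_pos: "\<beta> > 0"
    and beta: "\<And>k. \<beta> < \<delta> \<and>
        \<beta> < \<delta> / \<sigma> k * (1 - sqrt (1 - 2 * \<sigma> k + (\<sigma> k)\<^sup>2 *
               (1 + (lam k - \<gamma> k) / \<gamma> k * (1 + 1 / (1 - \<gamma> k * \<rho>)))\<^sup>2))"
    and alg_x: "\<And>k. x k \<in> cball xb \<beta>"
    and alg_z: "\<And>k. z k \<in> ball xb \<delta> \<and>
        (\<exists>g. GDERIV (\<lambda>u. real_of_ereal (moreau_env (\<gamma> k) f u)) (z k) :> g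
             \<and> z k = x k - (lam k - \<gamma> k) *\<^sub>R g)"
    and alg_step: "\<And>k. x (Suc k) = z k - (\<gamma> k / (lam k - \<gamma> k)) *\<^sub>R (x k - z k)"
    and lim: "x \<longlonglongrightarrow> xstar"
    and fstar: "f xstar = (INF u\<in>cball xb \<beta>. f u)"
    and eps_pos: "\<epsilon> > 0"
    and gap: "\<And>k. int k \<le> T \<Longrightarrow> norm (x (Suc k) - x k) > \<epsilon>"
  shows "ereal (real_of_int T) < 2 + ereal (2 / \<rho>) * (f (x 0) - f xstar) * ereal (1 / \<epsilon>\<^sup>2)"
proof -
  define c where "c k = \<rho> / 2 * (norm (x (Suc k) - x k))\<^sup>2" for k
  have descent: "f (x (Suc k)) + ereal (c k) \<le> f (x k)" for k
  proof -
    obtain g where gd: "GDERIV (\<lambda>u. real_of_ereal (moreau_env (\<gamma> k) f u)) (z k) :> g"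
      and zeq: "z k = x k - (lam k - \<gamma> k) *\<^sub>R g"
      using alg_z[of k] by blast
    have zk: "z k \<in> cball xb \<delta>" using alg_z[of k] by auto
    have xk: "x k \<in> cball xb \<delta>" using alg_x[of k] beta[of k] by (auto simp: dist_norm)
    have "0 < \<gamma> k" "\<gamma> k < lam k" using param[of k] lb_pos by auto
    moreover have "\<rho> * lam k \<le> 1" using param[of k] rho_pos by (simp add: field_simps)
    ultimately show ?thesis
      unfolding c_def
      by (rule moreau_gradient_step_descent[OF sf_gamma cvx_gamma _ _ _ xk zk gd zeq alg_step])
  qed
  have below: "f xstar \<le> f (x n)" for n unfolding fstar by (rule INF_lower) (rule alg_x)
  obtain cb :: real where "\<And>u. ereal cb \<le> f u" using bdd unfolding bounded_below_fun_def by blast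
  hence "f xstar \<noteq> -\<infinity>" by (metis MInfty_neq_ereal(1) ereal_infty_less_eq(2))
  show ?thesis
  proof (cases "f (x 0) = \<infinity>")
    case True
    then show ?thesis
      using below[of 0] rho_pos eps_pos by (simp add: ereal_mult_infty ereal_infty_mult)
  next
    case False
    then obtain a s where a: "f (x 0) = ereal a" and s: "f xstar = ereal s"
      using below[of 0] \<open>f xstar \<noteq> -\<infinity>\<close> proper unfolding proper_fun_def
      by (cases "f (x 0)"; cases "f xstar") auto
    have "\<rho> / 2 * (\<Sum>k<n. (norm (x (Suc k) - x k))\<^sup>2) \<le> a - s" for n
    proof -
      have "ereal s + ereal (\<Sum>k<n. c k) \<le> ereal a"
        using ereal_telescope_le[of "\<lambda>k. f (x k)", OF descent, of n] below[of n] a s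
        by (metis add_right_mono order_trans)
      thus ?thesis by (simp add: c_def sum_distrib_left)
    qed
    from long_steps_bound[OF rho_pos eps_pos this gap]
    show ?thesis using a s by simp
  qed
qed

end
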